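(* Let $G$ be a $4$-edge-connected graph and $u,v$ adjacent vertices of $G$ such that $v$ has at least $3$ edges to $V(G)\setminus\{u,v\}$. Let $va,vb$ be two distinct such edges with $a\ne b$, $a,b\notin\{u,v\}$, and let $G_1=G-u-v+ab$ (delete $u$ and $v$, add a new edge $ab$). If $G_1\in\mathcal{S}_3$, then $G\in\mathcal{S}_3$.
   Context: Graphs may have parallel edges but no loops. $G\in\mathcal{S}_3$ means: for every $\beta:V(G)\to\mathbb{Z}_3$ with $\sum_v\beta(v)\equiv0\pmod3$ there is a strongly-connected orientation $D$ of $G$ with $d^+_D(v)-d^-_D(v)\equiv\beta(v)\pmod3$ for all $v$. *)

theory Defs
  imports Main
begin

text \<open>A finite multigraph (parallel edges allowed, no loops) is given by a vertex set V,
an edge set E and an endpoint map ends :: 'e => 'a * 'a.\<close>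

definition multigraph :: "'a set \<Rightarrow> 'e set \<Rightarrow> ('e \<Rightarrow> 'a \<times> 'a) \<Rightarrow> bool" where
  "multigraph V E ends \<longleftrightarrow> finite V \<and> finite E \<and>
     (\<forall>e\<in>E. fst (ends e) \<in> V \<and> snd (ends e) \<in> V \<and> fst (ends e) \<noteq> snd (ends e))"

definition incident :: "('e \<Rightarrow> 'a \<times> 'a) \<Rightarrow> 'e \<Rightarrow> 'a \<Rightarrow> bool" where
  "incident ends e x \<longleftrightarrow> fst (ends e) = x \<or> snd (ends e) = x"

definition adj_rel :: "'e set \<Rightarrow> ('e \<Rightarrow> 'a \<times> 'a) \<Rightarrow> ('a \<times> 'a) set" where
  "adj_rel E ends = {(fst (ends e), snd (ends e)) | e. e \<in> E} \<union> {(snd (ends e), fst (ends e)) | e. e \<in> E}"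

definition connected_graph :: "'a set \<Rightarrow> 'e set \<Rightarrow> ('e \<Rightarrow> 'a \<times> 'a) \<Rightarrow> bool" where
  "connected_graph V E ends \<longleftrightarrow> V \<noteq> {} \<and> (\<forall>x\<in>V. \<forall>y\<in>V. (x, y) \<in> (adj_rel E ends)\<^sup>*)"

definition edge_connected :: "nat \<Rightarrow> 'a set \<Rightarrow> 'e set \<Rightarrow> ('e \<Rightarrow> 'a \<times> 'a) \<Rightarrow> bool" where
  "edge_connected k V E ends \<longleftrightarrow> (\<forall>F. F \<subseteq> E \<and> card F < k \<longrightarrow> connected_graph V (E - F) ends)"

text \<open>An orientation D: D e = True orients e from fst (ends e) to snd (ends e), otherwise reversed.\<close>
definition tail :: "('e \<Rightarrow> bool) \<Rightarrow> ('e \<Rightarrow> 'a \<times> 'a) \<Rightarrow> 'e \<Rightarrow> 'a" where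
  "tail D ends e = (if D e then fst (ends e) else snd (ends e))"

definition head :: "('e \<Rightarrow> bool) \<Rightarrow> ('e \<Rightarrow> 'a \<times> 'a) \<Rightarrow> 'e \<Rightarrow> 'a" where
  "head D ends e = (if D e then snd (ends e) else fst (ends e))"

definition outdeg :: "('e \<Rightarrow> bool) \<Rightarrow> 'e set \<Rightarrow> ('e \<Rightarrow> 'a \<times> 'a) \<Rightarrow> 'a \<Rightarrow> nat" where
  "outdeg D E ends x = card {e\<in>E. tail D ends e = x}"

definition indeg :: "('e \<Rightarrow> bool) \<Rightarrow> 'e set \<Rightarrow> ('e \<Rightarrow> 'a \<times> 'a) \<Rightarrow> 'a \<Rightarrow> nat" where
  "indeg D E ends x = card {e\<in>E. head D ends e = x}"

definition arcs :: "('e \<Rightarrow> bool) \<Rightarrow> 'e set \<Rightarrow> ('e \<Rightarrow> 'a \<times> 'a) \<Rightarrow> ('a \<times> 'a) set" where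
  "arcs D E ends = {(tail D ends e, head D ends e) | e. e \<in> E}"

definition strongly_connected_orientation ::
  "('e \<Rightarrow> bool) \<Rightarrow> 'a set \<Rightarrow> 'e set \<Rightarrow> ('e \<Rightarrow> 'a \<times> 'a) \<Rightarrow> bool" where
  "strongly_connected_orientation D V E ends \<longleftrightarrow> (\<forall>x\<in>V. \<forall>y\<in>V. (x, y) \<in> (arcs D E ends)\<^sup>*)"

text \<open>The class S_3, with Z_3 represented by integers modulo 3.\<close>
definition S3 :: "'a set \<Rightarrow> 'e set \<Rightarrow> ('e \<Rightarrow> 'a \<times> 'a) \<Rightarrow> bool" where
  "S3 V E ends \<longleftrightarrow> (\<forall>\<beta> :: 'a \<Rightarrow> int. (\<Sum>x\<in>V. \<beta> x) mod 3 = 0 \<longrightarrow>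
      (\<exists>D. strongly_connected_orientation D V E ends \<and>
           (\<forall>x\<in>V. (int (outdeg D E ends x) - int (indeg D E ends x)) mod 3 = \<beta> x mod 3)))"

text \<open>G_1 = G - u - v + ab: old edges are Some e, the new edge ab is None.\<close>
definition del2_add_edge_E :: "'e set \<Rightarrow> ('e \<Rightarrow> 'a \<times> 'a) \<Rightarrow> 'a \<Rightarrow> 'a \<Rightarrow> 'e option set" where
  "del2_add_edge_E E ends u v = Some ` {e\<in>E. \<not> incident ends e u \<and> \<not> incident ends e v} \<union> {None}"

definition del2_add_edge_ends :: "('e \<Rightarrow> 'a \<times> 'a) \<Rightarrow> 'a \<Rightarrow> 'a \<Rightarrow> 'e option \<Rightarrow> 'a \<times> 'a" where
  "del2_add_edge_ends ends a b eo = (case eo of None \<Rightarrow> (a, b) | Some e \<Rightarrow> ends e)"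

end

theory Submission
  imports Defs
begin

text \<open>First orient the edges at u and the edges from v to V - {u, v} other than ea and eb.
  By 4-edge-connectivity u has degree at least 4 and at least two further edges leave {u, v},
  which leaves enough freedom to make the net outdegrees of u and v congruent to \<beta> u and \<beta> v
  modulo 3 while u keeps an incoming and an outgoing arc. What these edges contribute on
  V - {u, v} is subtracted from \<beta>; the remainder still sums to 0 modulo 3, so G1 has a
  strongly connected orientation realizing it. Its edges are copied into G, and the new edge ab,
  directed say from a to b, becomes the path a, v, b through ea and eb. Net outdegrees add up,
  reachability in G1 carries over to G, v lies on that path and u is both entered and left.\<close>

definition arc_flow :: "('e \<Rightarrow> bool) \<Rightarrow> ('e \<Rightarrow> 'a \<times> 'a) \<Rightarrow> 'e \<Rightarrow> 'a \<Rightarrow> int" where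
  "arc_flow D ends e x = of_bool (tail D ends e = x) - of_bool (head D ends e = x)"

lemma outdeg_minus_indeg_eq_sum_arc_flow:
  assumes "finite E"
  shows "int (outdeg D E ends x) - int (indeg D E ends x) = (\<Sum>e\<in>E. arc_flow D ends e x)"
  using assms unfolding outdeg_def indeg_def arc_flow_def
  by (simp add: sum_subtractf sum_of_bool_eq Collect_conj_eq Int_commute)

lemma arc_flow_cong: "D e = D' e \<Longrightarrow> arc_flow D ends e x = arc_flow D' ends e x"
  unfolding arc_flow_def tail_def head_def by simp

lemma arc_flow_not_incident: "\<not> incident ends e x \<Longrightarrow> arc_flow D ends e x = 0"
  unfolding arc_flow_def tail_def head_def incident_def by auto

lemma sum_arc_flow_incident:
  assumes "finite F"
  shows "(\<Sum>e\<in>F. arc_flow D ends e x) = (\<Sum>e\<in>{e\<in>F. incident ends e x}. arc_flow D ends e x)"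
  using assms by (simp add: sum.inter_filter) (intro sum.cong refl; simp add: arc_flow_not_incident)

lemma tail_in_ends: "tail D ends e \<in> {fst (ends e), snd (ends e)}"
  unfolding tail_def by auto

lemma head_in_ends: "head D ends e \<in> {fst (ends e), snd (ends e)}"
  unfolding head_def by auto

lemma tail_ne_head: "fst (ends e) \<noteq> snd (ends e) \<Longrightarrow> tail D ends e \<noteq> head D ends e"
  unfolding tail_def head_def by auto

lemma head_eq_if_oriented_into:
  "fst (ends e) \<noteq> snd (ends e) \<Longrightarrow> incident ends e x \<Longrightarrow> D e = (snd (ends e) = x) \<Longrightarrow>
   head D ends e = x"
  unfolding head_def incident_def by auto

lemma tail_eq_if_oriented_out_of:
  "fst (ends e) \<noteq> snd (ends e) \<Longrightarrow> incident ends e x \<Longrightarrow> D e = (fst (ends e) = x) \<Longrightarrow>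
   tail D ends e = x"
  unfolding tail_def incident_def by auto

lemma tail_eq_other_end:
  "incident ends e x \<Longrightarrow> incident ends e y \<Longrightarrow> x \<noteq> y \<Longrightarrow> head D ends e = x \<Longrightarrow>
   tail D ends e = y"
  unfolding incident_def head_def tail_def by (auto split: if_splits)

lemma head_eq_other_end:
  "incident ends e x \<Longrightarrow> incident ends e y \<Longrightarrow> x \<noteq> y \<Longrightarrow> tail D ends e = x \<Longrightarrow>
   head D ends e = y"
  unfolding incident_def head_def tail_def by (auto split: if_splits)

lemma sum_arc_flow_at_center:
  assumes "finite F" "P \<subseteq> F" "\<forall>e\<in>F. fst (ends e) \<noteq> snd (ends e)"
    and "\<forall>e\<in>P. head D ends e = x" "\<forall>e\<in>F - P. tail D ends e = x"
  shows "(\<Sum>e\<in>F. arc_flow D ends e x) = int (card F) - 2 * int (card P)"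
proof -
  have flow: "arc_flow D ends e x = (if e \<in> P then -1 else 1)" if "e \<in> F" for e
  proof -
    have "tail D ends e \<noteq> head D ends e"
      using assms(3) that by (simp add: tail_ne_head)
    then show ?thesis
      using assms(4,5) that unfolding arc_flow_def by (cases "e \<in> P") auto
  qed
  have "(\<Sum>e\<in>F. arc_flow D ends e x) = (\<Sum>e\<in>F. if e \<in> P then -1 else 1)"
    using flow by (rule sum.cong[OF refl])
  also have "\<dots> = - int (card P) + int (card (F - P))"
    using assms(1,2) by (simp add: sum.If_cases Int_absorb1 Diff_eq[symmetric])
  also have "\<dots> = int (card F) - 2 * int (card P)"
    using assms(1,2) by (simp add: card_Diff_subset finite_subset card_mono of_nat_diff)
  finally show ?thesis .
qed

lemma sum_arc_flow_over_vertices: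
  assumes "finite V" "fst (ends e) \<in> V" "snd (ends e) \<in> V"
  shows "(\<Sum>x\<in>V. arc_flow D ends e x) = 0"
proof -
  have "tail D ends e \<in> V" "head D ends e \<in> V"
    using tail_in_ends[of D ends e] head_in_ends[of D ends e] assms by auto
  then show ?thesis
    using assms(1) unfolding arc_flow_def by (simp add: sum_subtractf of_bool_def sum.delta)
qed

lemma edge_connected_boundary_card:
  assumes "edge_connected k V E ends" "X \<subseteq> V" "x \<in> X" "y \<in> V - X"
  shows "k \<le> card {e\<in>E. (fst (ends e) \<in> X) \<noteq> (snd (ends e) \<in> X)}"
proof (rule ccontr)
  define F where "F = {e\<in>E. (fst (ends e) \<in> X) \<noteq> (snd (ends e) \<in> X)}"
  assume "\<not> k \<le> card {e\<in>E. (fst (ends e) \<in> X) \<noteq> (snd (ends e) \<in> X)}"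
  then have "connected_graph V (E - F) ends"
    using assms(1) unfolding edge_connected_def F_def by auto
  then have "(x, y) \<in> (adj_rel (E - F) ends)\<^sup>*"
    using assms(2-4) unfolding connected_graph_def by auto
  moreover have "z \<in> X" if "(x, z) \<in> (adj_rel (E - F) ends)\<^sup>*" for z
    using that
  proof (induction rule: rtrancl_induct)
    case base
    show ?case by (fact assms(3))
  next
    case (step z w)
    then obtain e where e: "e \<in> E - F" "(z, w) = ends e \<or> (w, z) = ends e"
      unfolding adj_rel_def by auto
    then have "(fst (ends e) \<in> X) = (snd (ends e) \<in> X)"
      unfolding F_def by auto
    then show ?case
      using e(2) step.IH by (metis fst_conv snd_conv)
  qed
  ultimately show False
    using assms(4) by auto
qed

lemma mutually_reachable_insert:
  assumes "\<forall>x\<in>A. (h, x) \<in> R\<^sup>* \<and> (x, h) \<in> R\<^sup>*" "y \<in> A" "z \<in> A" "(y, w) \<in> R" "(w, z) \<in> R"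
  shows "\<forall>x\<in>insert w A. (h, x) \<in> R\<^sup>* \<and> (x, h) \<in> R\<^sup>*"
proof -
  have "(h, w) \<in> R\<^sup>*"
    using assms(1,2,4) by (meson rtrancl.rtrancl_into_rtrancl)
  moreover have "(w, h) \<in> R\<^sup>*"
    using assms(1,3,5) by (meson converse_rtrancl_into_rtrancl)
  ultimately show ?thesis
    using assms(1) by blast
qed

lemma strongly_connected_orientation_if_hub:
  assumes "\<forall>x\<in>V. (h, x) \<in> (arcs D E ends)\<^sup>* \<and> (x, h) \<in> (arcs D E ends)\<^sup>*"
  shows "strongly_connected_orientation D V E ends"
  using assms unfolding strongly_connected_orientation_def by (blast intro: rtrancl_trans)

lemma obtain_residue_mod3:
  fixes z :: int
  obtains k :: nat where "k < 3" "int k mod 3 = z mod 3"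
  by (rule that[of "nat (z mod 3)"]) auto

text \<open>Here p, q and t count the edges directed into u from v, into u from V - {u, v}, and into v
  from V - {u, v}; the two congruences prescribe the resulting net outdegrees of u and v.
  Since 2 = -1 modulo 3, they fix p + q and t - p modulo 3.\<close>

lemma exists_star_split_mod3:
  fixes m s r :: nat and bu bv :: int
  assumes "1 \<le> m" "1 \<le> r" "4 \<le> m + s" "2 \<le> s + r"
  shows "\<exists>p q t. p \<le> m \<and> q \<le> s \<and> t \<le> r \<and> 1 \<le> p + q \<and> p + q < m + s \<and>
     (int m + int s - 2 * int (p + q)) mod 3 = bu mod 3 \<and>
     (int r + 2 * int p - int m - 2 * int t) mod 3 = bv mod 3"
proof -
  obtain k where k: "k < 3" "int k mod 3 = (bu - int m - int s - 1) mod 3"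
    by (rule obtain_residue_mod3)
  define p where "p = min (k + 1) m"
  define q where "q = k + 1 - p"
  have p_cases: "p = k + 1 \<or> p = m"
    unfolding p_def by linarith
  have pq: "p \<le> m" "q \<le> s" "1 \<le> p" "p + q = k + 1"
    using k(1) assms p_cases unfolding q_def by (auto simp: p_def)
  have pq_range: "1 \<le> p + q" "p + q < m + s"
    using pq k(1) assms by linarith+
  have u_cong: "(int m + int s - 2 * int (p + q)) mod 3 = bu mod 3"
    using k(2) unfolding pq(4) by (simp add: mod_eq_dvd_iff) presburger
  obtain t where t: "t < 3" "int t mod 3 = (bv + int m - int r + int p) mod 3"
    by (rule obtain_residue_mod3)
  have v_cong: "(int r + 2 * int p - int m - 2 * int t) mod 3 = bv mod 3"
    using t(2) by (simp add: mod_eq_dvd_iff) presburger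
  show ?thesis
  proof (cases "t \<le> r")
    case True
    show ?thesis by (intro exI[of _ p] exI[of _ q] exI[of _ t] conjI) fact+
  next
    case False
    \<comment> \<open>Moving one unit from p to q keeps p + q and lowers the required t from 2 to 1.\<close>
    then have "r = 1" "t = 2" using t(1) assms(2) by auto
    have "(int r + 2 * int (p - 1) - int m - 2 * int (1::nat)) mod 3 = bv mod 3"
      using v_cong \<open>t = 2\<close> pq(3) by (simp add: of_nat_diff mod_eq_dvd_iff) presburger
    moreover have "p - 1 \<le> m" "q + 1 \<le> s" "1 \<le> r" and shift: "p - 1 + (q + 1) = p + q"
      using pq assms p_cases \<open>r = 1\<close> k(1) unfolding q_def by auto
    ultimately show ?thesis
      using pq_range u_cong unfolding shift[symmetric]
      by (intro exI[of _ "p - 1"] exI[of _ "q + 1"] exI[of _ 1] conjI) assumption+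
  qed
qed

locale adjacent_pair_reduction =
  fixes V :: "'a set" and E :: "'e set" and ends :: "'e \<Rightarrow> 'a \<times> 'a"
    and u v a b :: 'a and ea eb :: 'e
  assumes multigraph: "multigraph V E ends"
    and u_in_V: "u \<in> V" and v_in_V: "v \<in> V" and u_ne_v: "u \<noteq> v"
    and ea: "ea \<in> E" "incident ends ea v" "incident ends ea a"
    and eb: "eb \<in> E" "incident ends eb v" "incident ends eb b"
    and ea_ne_eb: "ea \<noteq> eb"
    and a_notin: "a \<notin> {u, v}" and b_notin: "b \<notin> {u, v}"
begin

abbreviation reduced_edges :: "'e option set" where
  "reduced_edges \<equiv> del2_add_edge_E E ends u v"

abbreviation reduced_ends :: "'e option \<Rightarrow> 'a \<times> 'a" where
  "reduced_ends \<equiv> del2_add_edge_ends ends a b"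

definition E_uv :: "'e set" where
  "E_uv = {e\<in>E. incident ends e u \<and> incident ends e v}"

definition E_u :: "'e set" where
  "E_u = {e\<in>E. incident ends e u \<and> \<not> incident ends e v}"

definition E_v :: "'e set" where
  "E_v = {e\<in>E. incident ends e v \<and> \<not> incident ends e u} - {ea, eb}"

definition E_far :: "'e set" where
  "E_far = {e\<in>E. \<not> incident ends e u \<and> \<not> incident ends e v}"

definition star_edges :: "'e set" where
  "star_edges = E_uv \<union> E_u \<union> E_v"

definition star_flow :: "('e \<Rightarrow> bool) \<Rightarrow> 'a \<Rightarrow> int" where
  "star_flow D x = (\<Sum>e\<in>star_edges. arc_flow D ends e x)"

lemma finite_V: "finite V" and finite_E: "finite E"
  using multigraph unfolding multigraph_def by auto

lemma edge_ends:
  assumes "e \<in> E"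
  shows "fst (ends e) \<in> V" "snd (ends e) \<in> V" "fst (ends e) \<noteq> snd (ends e)"
  using multigraph assms unfolding multigraph_def by auto

lemma incident_ea_iff: "incident ends ea x \<longleftrightarrow> x = v \<or> x = a"
  using ea edge_ends[OF ea(1)] a_notin unfolding incident_def by auto

lemma incident_eb_iff: "incident ends eb x \<longleftrightarrow> x = v \<or> x = b"
  using eb edge_ends[OF eb(1)] b_notin unfolding incident_def by auto

lemma tail_head_of_edge:
  assumes "e \<in> E"
  shows "tail D ends e \<in> V" "head D ends e \<in> V" "tail D ends e \<noteq> head D ends e"
  using edge_ends[OF assms] tail_in_ends[of D ends e] head_in_ends[of D ends e]
    tail_ne_head[of ends e D] by auto

lemma a_in_V: "a \<in> V" and b_in_V: "b \<in> V"
  using ea eb edge_ends unfolding incident_def by auto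

lemma finite_edge_classes:
  "finite E_uv" "finite E_u" "finite E_v" "finite E_far" "finite star_edges"
  using finite_E unfolding E_uv_def E_u_def E_v_def E_far_def star_edges_def by auto

lemma star_edges_subset: "star_edges \<subseteq> E"
  unfolding star_edges_def E_uv_def E_u_def E_v_def by auto

lemma edge_classes_disjoint:
  "E_uv \<inter> E_u = {}" "E_uv \<inter> E_v = {}" "E_far \<inter> ({ea, eb} \<union> star_edges) = {}"
  "{ea, eb} \<inter> star_edges = {}"
  using incident_ea_iff incident_eb_iff u_ne_v a_notin b_notin
  unfolding E_uv_def E_u_def E_v_def E_far_def star_edges_def by auto

lemma E_decomposition: "E = E_far \<union> ({ea, eb} \<union> star_edges)"
  using ea(1) eb(1) unfolding E_far_def star_edges_def E_uv_def E_u_def E_v_def by auto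

lemma star_edges_at_u: "{e\<in>star_edges. incident ends e u} = E_uv \<union> E_u"
  unfolding star_edges_def E_uv_def E_u_def E_v_def by auto

lemma star_edges_at_v: "{e\<in>star_edges. incident ends e v} = E_uv \<union> E_v"
  unfolding star_edges_def E_uv_def E_u_def E_v_def by auto

lemma star_card_bounds:
  assumes "edge_connected 4 V E ends" "E_uv \<noteq> {}"
    and "3 \<le> card {e\<in>E. incident ends e v \<and> \<not> incident ends e u}"
  shows "1 \<le> card E_uv" "1 \<le> card E_v" "4 \<le> card E_uv + card E_u" "2 \<le> card E_u + card E_v"
proof -
  define E_v' where "E_v' = {e\<in>E. incident ends e v \<and> \<not> incident ends e u}"
  have "{ea, eb} \<subseteq> E_v'"
    using ea eb incident_ea_iff incident_eb_iff a_notin b_notin u_ne_v unfolding E_v'_def by auto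
  then have card_E_v: "card E_v = card E_v' - 2"
    using finite_E ea_ne_eb unfolding E_v_def E_v'_def[symmetric]
    by (simp add: card_Diff_subset finite_subset)
  show "1 \<le> card E_uv"
    using assms(2) finite_edge_classes(1) by (simp add: Suc_le_eq card_gt_0_iff)
  show "1 \<le> card E_v"
    using assms(3) card_E_v unfolding E_v'_def by simp
  have "{e\<in>E. (fst (ends e) \<in> {u}) \<noteq> (snd (ends e) \<in> {u})} = E_uv \<union> E_u"
    unfolding E_uv_def E_u_def incident_def by (auto dest: edge_ends(3))
  then show "4 \<le> card E_uv + card E_u"
    using edge_connected_boundary_card[OF assms(1), of "{u}" u a] u_in_V a_in_V a_notin
      finite_edge_classes edge_classes_disjoint(1)
    by (simp add: card_Un_disjoint)
  have "{e\<in>E. (fst (ends e) \<in> {u, v}) \<noteq> (snd (ends e) \<in> {u, v})} = E_u \<union> E_v'"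
    unfolding E_u_def E_v'_def incident_def using u_ne_v by (auto dest: edge_ends(3))
  moreover have "E_u \<inter> E_v' = {}" "finite E_v'"
    unfolding E_u_def E_v'_def using finite_E by auto
  ultimately have "4 \<le> card E_u + card E_v'"
    using edge_connected_boundary_card[OF assms(1), of "{u, v}" u a] u_in_V v_in_V a_in_V a_notin
      finite_edge_classes
    by (simp add: card_Un_disjoint)
  then show "2 \<le> card E_u + card E_v"
    using card_E_v assms(3) unfolding E_v'_def by linarith
qed

definition star_orientation :: "'e set \<Rightarrow> 'e set \<Rightarrow> 'e \<Rightarrow> bool" where
  "star_orientation P T e =
     (if e \<in> E_uv \<union> E_u then (if e \<in> P then snd (ends e) = u else fst (ends e) = u)
      else (if e \<in> T then snd (ends e) = v else fst (ends e) = v))"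

lemma star_orientation_at_u:
  assumes "e \<in> E_uv \<union> E_u"
  shows "e \<in> P \<Longrightarrow> head (star_orientation P T) ends e = u"
    and "e \<notin> P \<Longrightarrow> tail (star_orientation P T) ends e = u"
proof -
  have e: "fst (ends e) \<noteq> snd (ends e)" "incident ends e u"
    using assms edge_ends(3) unfolding E_uv_def E_u_def by auto
  have "star_orientation P T e = (if e \<in> P then snd (ends e) = u else fst (ends e) = u)"
    using assms unfolding star_orientation_def by simp
  then show "e \<in> P \<Longrightarrow> head (star_orientation P T) ends e = u"
    and "e \<notin> P \<Longrightarrow> tail (star_orientation P T) ends e = u"
    using head_eq_if_oriented_into[OF e] tail_eq_if_oriented_out_of[OF e] by simp_all
qed

lemma star_orientation_uv_edge:
  assumes "e \<in> E_uv"
  shows "e \<in> P \<Longrightarrow> tail (star_orientation P T) ends e = v"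
    and "e \<notin> P \<Longrightarrow> head (star_orientation P T) ends e = v"
proof -
  have "incident ends e u" "incident ends e v"
    using assms unfolding E_uv_def by auto
  then show "e \<in> P \<Longrightarrow> tail (star_orientation P T) ends e = v"
    and "e \<notin> P \<Longrightarrow> head (star_orientation P T) ends e = v"
    using assms star_orientation_at_u u_ne_v by (auto intro: tail_eq_other_end head_eq_other_end)
qed

lemma star_orientation_at_v:
  assumes "e \<in> E_v"
  shows "e \<in> T \<Longrightarrow> head (star_orientation P T) ends e = v"
    and "e \<notin> T \<Longrightarrow> tail (star_orientation P T) ends e = v"
proof -
  have e: "fst (ends e) \<noteq> snd (ends e)" "incident ends e v"
    using assms edge_ends(3) unfolding E_v_def by auto
  have "star_orientation P T e = (if e \<in> T then snd (ends e) = v else fst (ends e) = v)"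
    using assms unfolding star_orientation_def E_uv_def E_u_def E_v_def by auto
  then show "e \<in> T \<Longrightarrow> head (star_orientation P T) ends e = v"
    and "e \<notin> T \<Longrightarrow> tail (star_orientation P T) ends e = v"
    using head_eq_if_oriented_into[OF e] tail_eq_if_oriented_out_of[OF e] by simp_all
qed

lemma star_flow_star_orientation_u:
  assumes "P \<subseteq> E_uv \<union> E_u"
  shows "star_flow (star_orientation P T) u = int (card (E_uv \<union> E_u)) - 2 * int (card P)"
proof -
  have "star_flow (star_orientation P T) u = (\<Sum>e\<in>E_uv \<union> E_u. arc_flow (star_orientation P T) ends e u)"
    unfolding star_flow_def sum_arc_flow_incident[OF finite_edge_classes(5)] star_edges_at_u ..
  also have "\<dots> = int (card (E_uv \<union> E_u)) - 2 * int (card P)"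
  proof (rule sum_arc_flow_at_center)
    show "\<forall>e\<in>E_uv \<union> E_u. fst (ends e) \<noteq> snd (ends e)"
      using edge_ends(3) unfolding E_uv_def E_u_def by auto
  qed (use assms finite_edge_classes star_orientation_at_u in auto)
  finally show ?thesis .
qed

lemma star_flow_star_orientation_v:
  assumes "P \<subseteq> E_uv \<union> E_u" "T \<subseteq> E_v"
  shows "star_flow (star_orientation P T) v =
    int (card E_uv + card E_v) - 2 * int (card (E_uv - P) + card T)"
proof -
  define D where "D = star_orientation P T"
  have "star_flow D v = (\<Sum>e\<in>E_uv \<union> E_v. arc_flow D ends e v)"
    unfolding star_flow_def sum_arc_flow_incident[OF finite_edge_classes(5)] star_edges_at_v ..
  also have "\<dots> = int (card (E_uv \<union> E_v)) - 2 * int (card ((E_uv - P) \<union> T))"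
  proof (rule sum_arc_flow_at_center)
    show "\<forall>e\<in>E_uv \<union> E_v. fst (ends e) \<noteq> snd (ends e)"
      using edge_ends(3) unfolding E_uv_def E_v_def by auto
    show "\<forall>e\<in>E_uv - P \<union> T. head D ends e = v"
      using assms(2) star_orientation_uv_edge(2) star_orientation_at_v(1) unfolding D_def by blast
    show "\<forall>e\<in>E_uv \<union> E_v - (E_uv - P \<union> T). tail D ends e = v"
      using star_orientation_uv_edge(1) star_orientation_at_v(2) unfolding D_def by blast
  qed (use assms finite_edge_classes in auto)
  also have "card (E_uv \<union> E_v) = card E_uv + card E_v"
    using finite_edge_classes edge_classes_disjoint(2) by (simp add: card_Un_disjoint)
  also have "card ((E_uv - P) \<union> T) = card (E_uv - P) + card T"
    using finite_edge_classes edge_classes_disjoint(2) assms(2)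
    by (intro card_Un_disjoint) (auto intro: finite_subset)
  finally show ?thesis
    unfolding D_def .
qed

lemma star_orientation_exists:
  fixes \<beta>_u \<beta>_v :: int
  assumes "1 \<le> card E_uv" "1 \<le> card E_v" "4 \<le> card E_uv + card E_u" "2 \<le> card E_u + card E_v"
  obtains Ds e_in e_out where
    "star_flow Ds u mod 3 = \<beta>_u mod 3" "star_flow Ds v mod 3 = \<beta>_v mod 3"
    "e_in \<in> star_edges" "head Ds ends e_in = u" "e_out \<in> star_edges" "tail Ds ends e_out = u"
proof -
  obtain p q t where pqt: "p \<le> card E_uv" "q \<le> card E_u" "t \<le> card E_v"
    "1 \<le> p + q" "p + q < card E_uv + card E_u"
    "(int (card E_uv) + int (card E_u) - 2 * int (p + q)) mod 3 = \<beta>_u mod 3"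
    "(int (card E_v) + 2 * int p - int (card E_uv) - 2 * int t) mod 3 = \<beta>_v mod 3"
    using exists_star_split_mod3[OF assms] by blast
  obtain P_uv where P_uv: "P_uv \<subseteq> E_uv" "card P_uv = p"
    using obtain_subset_with_card_n[OF pqt(1)] by metis
  obtain P_u where P_u: "P_u \<subseteq> E_u" "card P_u = q"
    using obtain_subset_with_card_n[OF pqt(2)] by metis
  obtain T where T: "T \<subseteq> E_v" "card T = t"
    using obtain_subset_with_card_n[OF pqt(3)] by metis
  define P where "P = P_uv \<union> P_u"
  have P_sub: "P \<subseteq> E_uv \<union> E_u"
    unfolding P_def using P_uv P_u by auto
  have card_P: "card P = p + q"
    unfolding P_def using P_uv P_u finite_edge_classes edge_classes_disjoint(1)
    by (subst card_Un_disjoint) (auto intro: finite_subset)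
  have card_E_uv_P: "card (E_uv - P) = card E_uv - p"
  proof -
    have "E_uv - P = E_uv - P_uv"
      unfolding P_def using P_u edge_classes_disjoint(1) by blast
    then show ?thesis
      using P_uv finite_edge_classes by (simp add: card_Diff_subset finite_subset)
  qed
  have card_star_u: "card (E_uv \<union> E_u) = card E_uv + card E_u"
    using finite_edge_classes edge_classes_disjoint(1) by (simp add: card_Un_disjoint)
  obtain e_in where e_in: "e_in \<in> P"
    using card_P pqt(4) by fastforce
  have "P \<noteq> E_uv \<union> E_u"
    using card_P card_star_u pqt(5) by auto
  then obtain e_out where e_out: "e_out \<in> (E_uv \<union> E_u) - P"
    using P_sub by blast
  define Ds where "Ds = star_orientation P T"
  show ?thesis
  proof (rule that[of Ds e_in e_out])
    show "star_flow Ds u mod 3 = \<beta>_u mod 3"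
      using pqt(6) star_flow_star_orientation_u[OF P_sub] card_P card_star_u unfolding Ds_def by simp
    have "star_flow Ds v = int (card E_v) + 2 * int p - int (card E_uv) - 2 * int t"
      using star_flow_star_orientation_v[OF P_sub T(1)] card_E_uv_P T(2) pqt(1)
      unfolding Ds_def by (simp add: of_nat_diff)
    then show "star_flow Ds v mod 3 = \<beta>_v mod 3"
      using pqt(7) by simp
    show "e_in \<in> star_edges" "head Ds ends e_in = u"
      using e_in P_sub star_orientation_at_u(1) unfolding Ds_def star_edges_def by auto
    show "e_out \<in> star_edges" "tail Ds ends e_out = u"
      using e_out star_orientation_at_u(2) unfolding Ds_def star_edges_def by auto
  qed
qed

text \<open>The new edge ab, directed by D1, is replaced by the directed path through v formed by
  ea and eb.\<close>

definition lift_orientation :: "('e \<Rightarrow> bool) \<Rightarrow> ('e option \<Rightarrow> bool) \<Rightarrow> 'e \<Rightarrow> bool" where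
  "lift_orientation Ds D1 e =
     (if e \<in> E_far then D1 (Some e)
      else if e = ea then (if D1 None then snd (ends ea) = v else fst (ends ea) = v)
      else if e = eb then (if D1 None then fst (ends eb) = v else snd (ends eb) = v)
      else Ds e)"

lemma reduced_edges_eq: "reduced_edges = insert None (Some ` E_far)"
  unfolding del2_add_edge_E_def E_far_def by auto

lemma lift_orientation_star: "e \<in> star_edges \<Longrightarrow> lift_orientation Ds D1 e = Ds e"
  using edge_classes_disjoint(3,4) unfolding lift_orientation_def by auto

lemma lift_orientation_far:
  assumes "e \<in> E_far"
  shows "tail (lift_orientation Ds D1) ends e = tail D1 reduced_ends (Some e)"
    and "head (lift_orientation Ds D1) ends e = head D1 reduced_ends (Some e)"
  using assms unfolding lift_orientation_def tail_def head_def del2_add_edge_ends_def by simp_all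

lemma lift_orientation_ea_eb:
  "{(tail (lift_orientation Ds D1) ends ea, head (lift_orientation Ds D1) ends ea),
    (tail (lift_orientation Ds D1) ends eb, head (lift_orientation Ds D1) ends eb)} =
   {(tail D1 reduced_ends None, v), (v, head D1 reduced_ends None)}"
proof -
  define D where "D = lift_orientation Ds D1"
  have ea_eb_not_far: "ea \<notin> E_far" "eb \<notin> E_far"
    using ea(2) eb(2) unfolding E_far_def by auto
  have ends_None: "reduced_ends None = (a, b)"
    unfolding del2_add_edge_ends_def by simp
  have loopless: "fst (ends ea) \<noteq> snd (ends ea)" "fst (ends eb) \<noteq> snd (ends eb)"
    using edge_ends(3) ea(1) eb(1) by auto
  have a_v: "v \<noteq> a" and b_v: "v \<noteq> b"
    using a_notin b_notin by auto
  show ?thesis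
  proof (cases "D1 None")
    case True
    then have "D ea = (snd (ends ea) = v)" "D eb = (fst (ends eb) = v)"
      using ea_eb_not_far ea_ne_eb unfolding D_def lift_orientation_def by auto
    then have "head D ends ea = v" "tail D ends eb = v"
      using head_eq_if_oriented_into[OF loopless(1) ea(2)]
        tail_eq_if_oriented_out_of[OF loopless(2) eb(2)] by auto
    moreover from this have "tail D ends ea = a" "head D ends eb = b"
      using tail_eq_other_end[OF ea(2,3) a_v] head_eq_other_end[OF eb(2,3) b_v] by auto
    moreover have "tail D1 reduced_ends None = a" "head D1 reduced_ends None = b"
      using True ends_None unfolding tail_def head_def by auto
    ultimately show ?thesis
      unfolding D_def by simp
  next
    case False
    then have "D ea = (fst (ends ea) = v)" "D eb = (snd (ends eb) = v)"
      using ea_eb_not_far ea_ne_eb unfolding D_def lift_orientation_def by auto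
    then have "tail D ends ea = v" "head D ends eb = v"
      using tail_eq_if_oriented_out_of[OF loopless(1) ea(2)]
        head_eq_if_oriented_into[OF loopless(2) eb(2)] by auto
    moreover from this have "head D ends ea = a" "tail D ends eb = b"
      using head_eq_other_end[OF ea(2,3) a_v] tail_eq_other_end[OF eb(2,3) b_v] by auto
    moreover have "tail D1 reduced_ends None = b" "head D1 reduced_ends None = a"
      using False ends_None unfolding tail_def head_def by auto
    ultimately show ?thesis
      unfolding D_def by auto
  qed
qed

lemma new_edge_tail_head:
  "tail D1 reduced_ends None \<in> {a, b}" "head D1 reduced_ends None \<in> {a, b}"
  unfolding tail_def head_def del2_add_edge_ends_def by auto

lemma lift_orientation_flow_ea_eb:
  "arc_flow (lift_orientation Ds D1) ends ea x + arc_flow (lift_orientation Ds D1) ends eb x =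
   (if x = v then 0 else arc_flow D1 reduced_ends None x)"
proof -
  have "tail D1 reduced_ends None \<noteq> v" "head D1 reduced_ends None \<noteq> v"
    using new_edge_tail_head[of D1] a_notin b_notin by auto
  moreover have "(tail (lift_orientation Ds D1) ends ea = tail D1 reduced_ends None \<and>
      head (lift_orientation Ds D1) ends ea = v \<and> tail (lift_orientation Ds D1) ends eb = v \<and>
      head (lift_orientation Ds D1) ends eb = head D1 reduced_ends None) \<or>
    (tail (lift_orientation Ds D1) ends eb = tail D1 reduced_ends None \<and>
      head (lift_orientation Ds D1) ends eb = v \<and> tail (lift_orientation Ds D1) ends ea = v \<and>
      head (lift_orientation Ds D1) ends ea = head D1 reduced_ends None)"
    using lift_orientation_ea_eb[of Ds D1] unfolding doubleton_eq_iff by auto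
  ultimately show ?thesis
    unfolding arc_flow_def by (elim disjE conjE) simp_all
qed

lemma lift_arcs_through_v:
  "(tail D1 reduced_ends None, v) \<in> arcs (lift_orientation Ds D1) E ends"
  "(v, head D1 reduced_ends None) \<in> arcs (lift_orientation Ds D1) E ends"
  using lift_orientation_ea_eb[of Ds D1] ea(1) eb(1) unfolding arcs_def by blast+

lemma reduced_arcs_subset_lift:
  "arcs D1 reduced_edges reduced_ends \<subseteq> (arcs (lift_orientation Ds D1) E ends)\<^sup>*"
proof
  fix arc assume "arc \<in> arcs D1 reduced_edges reduced_ends"
  then obtain eo where eo: "eo \<in> reduced_edges" "arc = (tail D1 reduced_ends eo, head D1 reduced_ends eo)"
    unfolding arcs_def by blast
  then consider "eo = None" | e where "e \<in> E_far" "eo = Some e"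
    unfolding reduced_edges_eq by blast
  then show "arc \<in> (arcs (lift_orientation Ds D1) E ends)\<^sup>*"
  proof cases
    case 1
    then show ?thesis
      using eo(2) lift_arcs_through_v[of D1 Ds] by (meson converse_rtrancl_into_rtrancl r_into_rtrancl)
  next
    case 2
    then have "e \<in> E"
      unfolding E_far_def by auto
    moreover have "arc = (tail (lift_orientation Ds D1) ends e, head (lift_orientation Ds D1) ends e)"
      using 2 eo(2) lift_orientation_far[of e Ds D1] by simp
    ultimately have "arc \<in> arcs (lift_orientation Ds D1) E ends"
      unfolding arcs_def by blast
    then show ?thesis
      by (rule r_into_rtrancl)
  qed
qed

lemma lift_orientation_strongly_connected:
  assumes "strongly_connected_orientation D1 (V - {u, v}) reduced_edges reduced_ends"
    and "e_in \<in> star_edges" "head Ds ends e_in = u"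
    and "e_out \<in> star_edges" "tail Ds ends e_out = u"
  shows "strongly_connected_orientation (lift_orientation Ds D1) V E ends"
proof -
  define D where "D = lift_orientation Ds D1"
  define R where "R = arcs D E ends"
  have "\<forall>x\<in>V - {u, v}. (a, x) \<in> R\<^sup>* \<and> (x, a) \<in> R\<^sup>*"
  proof -
    have "(arcs D1 reduced_edges reduced_ends)\<^sup>* \<subseteq> R\<^sup>*"
      using reduced_arcs_subset_lift unfolding R_def D_def by (metis rtrancl_subset_rtrancl)
    moreover have "a \<in> V - {u, v}"
      using a_in_V a_notin by auto
    ultimately show ?thesis
      using assms(1) unfolding strongly_connected_orientation_def by blast
  qed
  moreover have "tail D1 reduced_ends None \<in> V - {u, v}" "head D1 reduced_ends None \<in> V - {u, v}"
    using new_edge_tail_head[of D1] a_in_V b_in_V a_notin b_notin by auto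
  ultimately have "\<forall>x\<in>insert v (V - {u, v}). (a, x) \<in> R\<^sup>* \<and> (x, a) \<in> R\<^sup>*"
    using lift_arcs_through_v[of D1 Ds] unfolding R_def D_def by (rule mutually_reachable_insert)
  moreover have "tail D ends e_in \<in> insert v (V - {u, v})" "head D ends e_out \<in> insert v (V - {u, v})"
    "(tail D ends e_in, u) \<in> R" "(u, head D ends e_out) \<in> R"
  proof -
    have "e_in \<in> E" "e_out \<in> E"
      using assms(2,4) star_edges_subset by auto
    then have "(tail D ends e_in, head D ends e_in) \<in> R" "(tail D ends e_out, head D ends e_out) \<in> R"
      unfolding R_def arcs_def by blast+
    moreover have "head D ends e_in = u" "tail D ends e_out = u"
      using assms(2-5) lift_orientation_star unfolding D_def tail_def head_def by auto
    ultimately show "tail D ends e_in \<in> insert v (V - {u, v})" "head D ends e_out \<in> insert v (V - {u, v})"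
      "(tail D ends e_in, u) \<in> R" "(u, head D ends e_out) \<in> R"
      using tail_head_of_edge[of e_in D] tail_head_of_edge[of e_out D] \<open>e_in \<in> E\<close> \<open>e_out \<in> E\<close>
      by auto
  qed
  ultimately have "\<forall>x\<in>insert u (insert v (V - {u, v})). (a, x) \<in> R\<^sup>* \<and> (x, a) \<in> R\<^sup>*"
    by (rule mutually_reachable_insert)
  moreover have "insert u (insert v (V - {u, v})) = V"
    using u_in_V v_in_V by auto
  ultimately show ?thesis
    unfolding R_def D_def by (simp add: strongly_connected_orientation_if_hub)
qed

lemma sum_star_flow_over_vertices: "(\<Sum>x\<in>V. star_flow D x) = 0"
proof -
  have "(\<Sum>x\<in>V. star_flow D x) = (\<Sum>e\<in>star_edges. \<Sum>x\<in>V. arc_flow D ends e x)"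
    unfolding star_flow_def by (rule sum.swap)
  also have "\<dots> = 0"
    using star_edges_subset edge_ends finite_V
    by (intro sum.neutral ballI sum_arc_flow_over_vertices) auto
  finally show ?thesis .
qed

lemma reduced_demand_sum_mod3:
  fixes \<beta> :: "'a \<Rightarrow> int"
  assumes "(\<Sum>x\<in>V. \<beta> x) mod 3 = 0"
    and "star_flow Ds u mod 3 = \<beta> u mod 3" "star_flow Ds v mod 3 = \<beta> v mod 3"
  shows "(\<Sum>x\<in>V - {u, v}. \<beta> x - star_flow Ds x) mod 3 = 0"
proof -
  have V_split: "V = insert u (insert v (V - {u, v}))"
    using u_in_V v_in_V by auto
  have "(\<Sum>x\<in>V. \<beta> x - star_flow Ds x) = (\<Sum>x\<in>V. \<beta> x)"
    using sum_star_flow_over_vertices[of Ds] by (simp add: sum_subtractf)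
  moreover have "(\<Sum>x\<in>V. \<beta> x - star_flow Ds x) =
      (\<beta> u - star_flow Ds u) + (\<beta> v - star_flow Ds v) + (\<Sum>x\<in>V - {u, v}. \<beta> x - star_flow Ds x)"
    using finite_V u_ne_v by (subst V_split) simp
  ultimately have "(\<Sum>x\<in>V - {u, v}. \<beta> x - star_flow Ds x) =
      (\<Sum>x\<in>V. \<beta> x) + (star_flow Ds u - \<beta> u) + (star_flow Ds v - \<beta> v)"
    by simp
  moreover have "3 dvd (\<Sum>x\<in>V. \<beta> x)" "3 dvd (star_flow Ds u - \<beta> u)" "3 dvd (star_flow Ds v - \<beta> v)"
    using assms by (simp_all add: mod_eq_dvd_iff mod_0_imp_dvd)
  ultimately show ?thesis
    by simp
qed

definition far_flow :: "('e option \<Rightarrow> bool) \<Rightarrow> 'a \<Rightarrow> int" where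
  "far_flow D1 x = (\<Sum>e\<in>E_far. arc_flow D1 reduced_ends (Some e) x)"

lemma far_flow_at_u_v: "x \<in> {u, v} \<Longrightarrow> far_flow D1 x = 0"
  unfolding far_flow_def E_far_def
  by (intro sum.neutral ballI arc_flow_not_incident) (auto simp: incident_def del2_add_edge_ends_def)

lemma reduced_net_flow:
  "int (outdeg D1 reduced_edges reduced_ends x) - int (indeg D1 reduced_edges reduced_ends x) =
   arc_flow D1 reduced_ends None x + far_flow D1 x"
proof -
  have "int (outdeg D1 reduced_edges reduced_ends x) - int (indeg D1 reduced_edges reduced_ends x)
      = (\<Sum>eo\<in>insert None (Some ` E_far). arc_flow D1 reduced_ends eo x)"
    unfolding reduced_edges_eq using finite_edge_classes(4)
    by (intro outdeg_minus_indeg_eq_sum_arc_flow) simp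
  also have "\<dots> = arc_flow D1 reduced_ends None x + far_flow D1 x"
    unfolding far_flow_def using finite_edge_classes(4) by (simp add: sum.reindex)
  finally show ?thesis .
qed

lemma lift_orientation_net_flow_decomposition:
  "int (outdeg (lift_orientation Ds D1) E ends x) - int (indeg (lift_orientation Ds D1) E ends x) =
   far_flow D1 x + (if x = v then 0 else arc_flow D1 reduced_ends None x) + star_flow Ds x"
proof -
  define D where "D = lift_orientation Ds D1"
  have "int (outdeg D E ends x) - int (indeg D E ends x) = (\<Sum>e\<in>E. arc_flow D ends e x)"
    by (rule outdeg_minus_indeg_eq_sum_arc_flow[OF finite_E])
  also have "\<dots> = (\<Sum>e\<in>E_far. arc_flow D ends e x)
      + (\<Sum>e\<in>{ea, eb} \<union> star_edges. arc_flow D ends e x)"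
    by (subst E_decomposition, rule sum.union_disjoint)
      (use finite_edge_classes edge_classes_disjoint(3) in auto)
  also have "(\<Sum>e\<in>{ea, eb} \<union> star_edges. arc_flow D ends e x)
      = (arc_flow D ends ea x + arc_flow D ends eb x) + (\<Sum>e\<in>star_edges. arc_flow D ends e x)"
    using finite_edge_classes(5) edge_classes_disjoint(4) ea_ne_eb by (subst sum.union_disjoint) auto
  also have "(\<Sum>e\<in>E_far. arc_flow D ends e x) = far_flow D1 x"
    unfolding far_flow_def D_def arc_flow_def using lift_orientation_far by (intro sum.cong) simp_all
  also have "(\<Sum>e\<in>star_edges. arc_flow D ends e x) = star_flow Ds x"
    unfolding star_flow_def D_def by (intro sum.cong refl arc_flow_cong lift_orientation_star)
  finally show ?thesis
    unfolding D_def lift_orientation_flow_ea_eb by simp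
qed

lemma lift_orientation_net_flow:
  "int (outdeg (lift_orientation Ds D1) E ends x) - int (indeg (lift_orientation Ds D1) E ends x) =
    (if x \<in> {u, v} then 0
     else int (outdeg D1 reduced_edges reduced_ends x) - int (indeg D1 reduced_edges reduced_ends x))
    + star_flow Ds x"
proof (cases "x \<in> {u, v}")
  case True
  have "arc_flow D1 reduced_ends None u = 0"
    using a_notin b_notin
    by (intro arc_flow_not_incident) (auto simp: incident_def del2_add_edge_ends_def)
  then show ?thesis
    using True lift_orientation_net_flow_decomposition[of Ds D1 x] far_flow_at_u_v[OF True] by auto
next
  case False
  then show ?thesis
    using lift_orientation_net_flow_decomposition[of Ds D1 x] reduced_net_flow[of D1 x] by simp
qed

lemma lift_orientation_net_flow_mod3:
  fixes \<beta> :: "'a \<Rightarrow> int"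
  assumes "\<forall>x\<in>V - {u, v}. (int (outdeg D1 reduced_edges reduced_ends x)
      - int (indeg D1 reduced_edges reduced_ends x)) mod 3 = (\<beta> x - star_flow Ds x) mod 3"
    and "star_flow Ds u mod 3 = \<beta> u mod 3" "star_flow Ds v mod 3 = \<beta> v mod 3"
    and "x \<in> V"
  shows "(int (outdeg (lift_orientation Ds D1) E ends x)
      - int (indeg (lift_orientation Ds D1) E ends x)) mod 3 = \<beta> x mod 3"
proof (cases "x \<in> {u, v}")
  case True
  then show ?thesis
    using lift_orientation_net_flow[of Ds D1 x] assms(2,3) by auto
next
  case False
  define net1 where "net1 = int (outdeg D1 reduced_edges reduced_ends x)
      - int (indeg D1 reduced_edges reduced_ends x)"
  have "(net1 + star_flow Ds x) mod 3 = (net1 mod 3 + star_flow Ds x) mod 3"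
    by (simp add: mod_add_left_eq)
  also have "\<dots> = ((\<beta> x - star_flow Ds x) mod 3 + star_flow Ds x) mod 3"
    using assms(1,4) False unfolding net1_def by simp
  also have "\<dots> = \<beta> x mod 3"
    by (simp add: mod_add_left_eq)
  finally show ?thesis
    using lift_orientation_net_flow[of Ds D1 x] False unfolding net1_def by simp
qed

end

theorem mainTheorem10:
  fixes V :: "'a set" and E :: "'e set" and ends :: "'e \<Rightarrow> 'a \<times> 'a"
    and u v a b :: 'a and ea eb :: 'e
  assumes "multigraph V E ends"
    and "edge_connected 4 V E ends"
    and "u \<in> V" and "v \<in> V"
    and "\<exists>e\<in>E. incident ends e u \<and> incident ends e v"
    and "card {e\<in>E. incident ends e v \<and> \<not> incident ends e u} \<ge> 3"
    and "ea \<in> E" and "eb \<in> E" and "ea \<noteq> eb"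
    and "incident ends ea v" and "incident ends ea a"
    and "incident ends eb v" and "incident ends eb b"
    and "a \<noteq> b" and "a \<notin> {u, v}" and "b \<notin> {u, v}"
    and "S3 (V - {u, v}) (del2_add_edge_E E ends u v) (del2_add_edge_ends ends a b)"
  shows "S3 V E ends"
proof -
  have "u \<noteq> v"
    using assms(6) by (metis (no_types, lifting) card.empty empty_Collect_eq not_numeral_le_zero)
  then interpret adjacent_pair_reduction V E ends u v a b ea eb
    using assms by unfold_locales auto
  have "E_uv \<noteq> {}"
    using assms(5) unfolding E_uv_def by blast
  note bounds = star_card_bounds[OF assms(2) this assms(6)]
  show ?thesis
    unfolding S3_def
  proof (intro allI impI)
    fix \<beta> :: "'a \<Rightarrow> int"
    assume "(\<Sum>x\<in>V. \<beta> x) mod 3 = 0"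
    obtain Ds e_in e_out where Ds: "star_flow Ds u mod 3 = \<beta> u mod 3" "star_flow Ds v mod 3 = \<beta> v mod 3"
      "e_in \<in> star_edges" "head Ds ends e_in = u" "e_out \<in> star_edges" "tail Ds ends e_out = u"
      using star_orientation_exists[OF bounds] by blast
    obtain D1 where D1_sc: "strongly_connected_orientation D1 (V - {u, v}) reduced_edges reduced_ends"
      and D1_net: "\<forall>x\<in>V - {u, v}. (int (outdeg D1 reduced_edges reduced_ends x)
         - int (indeg D1 reduced_edges reduced_ends x)) mod 3 = (\<beta> x - star_flow Ds x) mod 3"
      using assms(17)[unfolded S3_def, rule_format,
          OF reduced_demand_sum_mod3[OF \<open>(\<Sum>x\<in>V. \<beta> x) mod 3 = 0\<close> Ds(1,2)]]
      by blast
    show "\<exists>D. strongly_connected_orientation D V E ends \<and>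
        (\<forall>x\<in>V. (int (outdeg D E ends x) - int (indeg D E ends x)) mod 3 = \<beta> x mod 3)"
      using lift_orientation_strongly_connected[OF D1_sc Ds(3-6)]
        lift_orientation_net_flow_mod3[OF D1_net Ds(1,2)] by blast
  qed
qed

end
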